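(* Let $\mathbb{C}$ be a locally small category and $\mathbb{C}_{\mathit{fin}}$ a full subcategory satisfying (C1)–(C5) below. Let $\mathbb{A}$ be a full subcategory of $\mathbb{C}_{\mathit{fin}}$ and let $F\in\mathrm{Ob}(\mathbb{C})$ be universal and locally finite for $\mathbb{A}$. If $\mathbb{A}$ has finite Ramsey degrees, then for every $A\in\mathrm{Ob}(\mathbb{A})$ there exists an essential coloring $\gamma_A:\hom(A,F)\to\{0,\dots,t_{\mathbb{A}}(A)-1\}$.
   Context: Write $A\to B$ if $\hom(A,B)\ne\varnothing$. Conditions: (C1) all morphisms of $\mathbb{C}$ are monomorphisms; (C2) $\mathrm{Ob}(\mathbb{C}_{\mathit{fin}})$ is a set; (C3) $\hom(A,B)$ is finite for $A,B\in\mathrm{Ob}(\mathbb{C}_{\mathit{fin}})$; (C4) for every $F\in\mathrm{Ob}(\mathbb{C})$ there is $A\in\mathrm{Ob}(\mathbb{C}_{\mathit{fin}})$ with $A\to F$; (C5) for every $B\in\mathrm{Ob}(\mathbb{C}_{\mathit{fin}})$ the set $\{A\in\mathrm{Ob}(\mathbb{C}_{\mathit{fin}}):A\to B\}$ is finite. $F$ is universal for $\mathbb{A}$ if $A\to F$ for all $A\in\mathrm{Ob}(\mathbb{A})$. $F$ is locally finite for $\mathbb{A}$ if for all $A,B\in\mathrm{Ob}(\mathbb{A})$, $e\in\hom(A,F)$, $f\in\hom(B,F)$ there exist $D\in\mathrm{Ob}(\mathbb{A})$, $r\in\hom(D,F)$, $p\in\hom(A,D)$, $q\in\hom(B,D)$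 with $r\cdot p=e$, $r\cdot q=f$, such that for every $H\in\mathrm{Ob}(\mathbb{C})$, $r'\in\hom(H,F)$, $p'\in\hom(A,H)$, $q'\in\hom(B,H)$ with $r'\cdot p'=e$, $r'\cdot q'=f$ there is $s\in\hom(D,H)$ with $r'\cdot s=r$, $s\cdot p=p'$, $s\cdot q=q'$. $C\to(B)^A_{k,t}$ means that for every $\chi:\hom(A,C)\to\{0,\dots,k-1\}$ there is $w\in\hom(B,C)$ with $|\chi(w\cdot\hom(A,B))|\le t$. $t_{\mathbb{A}}(A)$ is the least positive $n$ such that for all $k\ge2$ and all $B\in\mathrm{Ob}(\mathbb{A})$ there is $C\in\mathrm{Ob}(\mathbb{A})$ with $C\to(B)^A_{k,n}$, and $\infty$ otherwise; $\mathbb{A}$ has finite Ramsey degrees if $t_{\mathbb{A}}(A)<\infty$ for all $A$. For $\chi:\hom(A,F)\to\{0,\dots,k-1\}$ and $w\in\hom(B,F)$, $\chi^{(w)}(f)=\chi(w\cdot f)$; $\ker g=\{(x,y):g(x)=g(y)\}$. For a positive integer $t$, a coloring $\lambda:\hom(A,B)\to\{0,\dots,t-1\}$ is essential at $B$ if for every $k\ge2$ and every $\chi:\hom(A,F)\to\{0,\dots,k-1\}$ there is $w\in\hom(B,F)$ with $\ker\lambda\subseteq\ker\chi^{(w)}$; a coloring $\gamma:\hom(A,F)\to\{0,\dots,t-1\}$ is essential if $\gamma^{(w)}$ is essential at $B$ for every $B\in\mathrm{Ob}(\mathbb{A})$ with $A\to B$ and every $w\in\hom(B,F)$. *)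

theory Defs
  imports Main "HOL-Library.Extended_Nat"
begin

text \<open>A category given by a set of objects, hom-sets, composition (comp g f = g \<cdot> f,
 first f then g) and identities. Locally small: hom-sets are sets (automatic in HOL).\<close>

record ('o, 'm) cat =
  Obj :: "'o set"
  Hom :: "'o \<Rightarrow> 'o \<Rightarrow> 'm set"
  Comp :: "'m \<Rightarrow> 'm \<Rightarrow> 'm"
  Ide :: "'o \<Rightarrow> 'm"

definition category :: "('o, 'm) cat \<Rightarrow> bool" where
  "category C \<longleftrightarrow>
     (\<forall>A\<in>Obj C. \<forall>B\<in>Obj C. \<forall>A'\<in>Obj C. \<forall>B'\<in>Obj C. \<forall>f.
        f \<in> Hom C A B \<longrightarrow> f \<in> Hom C A' B' \<longrightarrow> A = A' \<and> B = B') \<and>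
     (\<forall>A\<in>Obj C. \<forall>B\<in>Obj C. \<forall>D\<in>Obj C. \<forall>f\<in>Hom C A B. \<forall>g\<in>Hom C B D.
        Comp C g f \<in> Hom C A D) \<and>
     (\<forall>A\<in>Obj C. \<forall>B\<in>Obj C. \<forall>D\<in>Obj C. \<forall>E\<in>Obj C.
        \<forall>f\<in>Hom C A B. \<forall>g\<in>Hom C B D. \<forall>h\<in>Hom C D E.
        Comp C h (Comp C g f) = Comp C (Comp C h g) f) \<and>
     (\<forall>A\<in>Obj C. Ide C A \<in> Hom C A A) \<and>
     (\<forall>A\<in>Obj C. \<forall>B\<in>Obj C. \<forall>f\<in>Hom C A B.
        Comp C (Ide C B) f = f \<and> Comp C f (Ide C A) = f)"

definition arrow :: "('o, 'm) cat \<Rightarrow> 'o \<Rightarrow> 'o \<Rightarrow> bool" where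
  "arrow C A B \<longleftrightarrow> Hom C A B \<noteq> {}"

definition mono :: "('o, 'm) cat \<Rightarrow> 'o \<Rightarrow> 'o \<Rightarrow> 'm \<Rightarrow> bool" where
  "mono C A B f \<longleftrightarrow>
     (\<forall>X\<in>Obj C. \<forall>g\<in>Hom C X A. \<forall>h\<in>Hom C X A. Comp C f g = Comp C f h \<longrightarrow> g = h)"

text \<open>Conditions (C1)--(C5) for the full subcategory with object set Cfin.
 (C2), that Ob(Cfin) is a set, holds automatically in HOL.\<close>

definition conditions_C1_C5 :: "('o, 'm) cat \<Rightarrow> 'o set \<Rightarrow> bool" where
  "conditions_C1_C5 C Cfin \<longleftrightarrow>
     Cfin \<subseteq> Obj C \<and>
     (\<forall>A\<in>Obj C. \<forall>B\<in>Obj C. \<forall>f\<in>Hom C A B. mono C A B f) \<and>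
     (\<forall>A\<in>Cfin. \<forall>B\<in>Cfin. finite (Hom C A B)) \<and>
     (\<forall>F\<in>Obj C. \<exists>A\<in>Cfin. arrow C A F) \<and>
     (\<forall>B\<in>Cfin. finite {A\<in>Cfin. arrow C A B})"

definition universal :: "('o, 'm) cat \<Rightarrow> 'o set \<Rightarrow> 'o \<Rightarrow> bool" where
  "universal C Aset F \<longleftrightarrow> (\<forall>A\<in>Aset. arrow C A F)"

definition locally_finite :: "('o, 'm) cat \<Rightarrow> 'o set \<Rightarrow> 'o \<Rightarrow> bool" where
  "locally_finite C Aset F \<longleftrightarrow>
     (\<forall>A\<in>Aset. \<forall>B\<in>Aset. \<forall>e\<in>Hom C A F. \<forall>f\<in>Hom C B F.
       \<exists>D\<in>Aset. \<exists>r\<in>Hom C D F. \<exists>p\<in>Hom C A D. \<exists>q\<in>Hom C B D.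
         Comp C r p = e \<and> Comp C r q = f \<and>
         (\<forall>H\<in>Obj C. \<forall>r'\<in>Hom C H F. \<forall>p'\<in>Hom C A H. \<forall>q'\<in>Hom C B H.
            Comp C r' p' = e \<longrightarrow> Comp C r' q' = f \<longrightarrow>
            (\<exists>s\<in>Hom C D H. Comp C r' s = r \<and> Comp C s p = p' \<and> Comp C s q = q')))"

definition ramsey_arrow ::
  "('o, 'm) cat \<Rightarrow> 'o \<Rightarrow> 'o \<Rightarrow> 'o \<Rightarrow> nat \<Rightarrow> nat \<Rightarrow> bool" where
  "ramsey_arrow C Cc B A k t \<longleftrightarrow>
     (\<forall>\<chi> :: 'm \<Rightarrow> nat. \<chi> ` Hom C A Cc \<subseteq> {..<k} \<longrightarrow>
        (\<exists>w\<in>Hom C B Cc. card (\<chi> ` ((\<lambda>f. Comp C w f) ` Hom C A B)) \<le> t))"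

definition ramsey_bound :: "('o, 'm) cat \<Rightarrow> 'o set \<Rightarrow> 'o \<Rightarrow> nat \<Rightarrow> bool" where
  "ramsey_bound C Aset A n \<longleftrightarrow>
     (\<forall>k\<ge>2. \<forall>B\<in>Aset. \<exists>Cc\<in>Aset. ramsey_arrow C Cc B A k n)"

definition ramsey_degree :: "('o, 'm) cat \<Rightarrow> 'o set \<Rightarrow> 'o \<Rightarrow> enat" where
  "ramsey_degree C Aset A =
     (if \<exists>n>0. ramsey_bound C Aset A n
      then enat (LEAST n. n > 0 \<and> ramsey_bound C Aset A n) else \<infinity>)"

definition finite_ramsey_degrees :: "('o, 'm) cat \<Rightarrow> 'o set \<Rightarrow> bool" where
  "finite_ramsey_degrees C Aset \<longleftrightarrow> (\<forall>A\<in>Aset. ramsey_degree C Aset A < \<infinity>)"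

definition ker_on :: "'m set \<Rightarrow> ('m \<Rightarrow> nat) \<Rightarrow> ('m \<times> 'm) set" where
  "ker_on X g = {(x, y). x \<in> X \<and> y \<in> X \<and> g x = g y}"

definition recolor :: "('o, 'm) cat \<Rightarrow> ('m \<Rightarrow> nat) \<Rightarrow> 'm \<Rightarrow> 'm \<Rightarrow> nat" where
  "recolor C \<chi> w = (\<lambda>f. \<chi> (Comp C w f))"

definition essential_at ::
  "('o, 'm) cat \<Rightarrow> 'o \<Rightarrow> nat \<Rightarrow> 'o \<Rightarrow> 'o \<Rightarrow> ('m \<Rightarrow> nat) \<Rightarrow> bool" where
  "essential_at C F t A B lam \<longleftrightarrow>
     t > 0 \<and> lam ` Hom C A B \<subseteq> {..<t} \<and>
     (\<forall>k\<ge>2. \<forall>\<chi> :: 'm \<Rightarrow> nat. \<chi> ` Hom C A F \<subseteq> {..<k} \<longrightarrow>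
        (\<exists>w\<in>Hom C B F. ker_on (Hom C A B) lam \<subseteq> ker_on (Hom C A B) (recolor C \<chi> w)))"

definition essential ::
  "('o, 'm) cat \<Rightarrow> 'o set \<Rightarrow> 'o \<Rightarrow> nat \<Rightarrow> 'o \<Rightarrow> ('m \<Rightarrow> nat) \<Rightarrow> bool" where
  "essential C Aset F t A \<gamma> \<longleftrightarrow>
     t > 0 \<and> \<gamma> ` Hom C A F \<subseteq> {..<t} \<and>
     (\<forall>B\<in>Aset. arrow C A B \<longrightarrow>
        (\<forall>w\<in>Hom C B F. essential_at C F t A B (recolor C \<gamma> w)))"

end

(*
  For a single object D of the class, the Ramsey degree t gives a t-coloring of hom(A, D) whose
  pullback along every map B -> D is essential: otherwise every t-coloring has a refuting coloring
  of hom(A, F), and a copy of D in F on which the common refinement of these finitely many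
  colorings takes at most t values yields a t-coloring refuting itself.
  Local finiteness lets finitely many copies w : B -> F factor through one copy r : D -> F, and
  since r is mono, colorings of hom(A, D) extend along r. So the requirements "gamma^(w) is
  essential at B", each depending on finitely many values of gamma, are finitely satisfiable, and
  compactness of {0..t-1}^hom(A, F) (Tychonoff) satisfies all of them at once.
*)

theory Submission
  imports Defs "HOL-Analysis.Analysis"
begin

section \<open>Compactness for colorings\<close>

lemma closedin_cylinder_discrete:
  assumes "S \<subseteq> I"
  shows "closedin (product_topology (\<lambda>_. discrete_topology V) I)
           {g \<in> topspace (product_topology (\<lambda>_. discrete_topology V) I). \<forall>i\<in>S. g i = c i}"
proof -
  let ?C = "\<lambda>i. if i \<in> S then {c i} \<inter> V else V"
  have "{g \<in> topspace (product_topology (\<lambda>_. discrete_topology V) I). \<forall>i\<in>S. g i = c i} = PiE I ?C"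
  proof (intro equalityI subsetI)
    fix g assume "g \<in> {g \<in> topspace (product_topology (\<lambda>_. discrete_topology V) I). \<forall>i\<in>S. g i = c i}"
    then show "g \<in> PiE I ?C"
      using assms by (auto simp: PiE_iff)
  next
    fix g assume g: "g \<in> PiE I ?C"
    have "g i \<in> V" if "i \<in> I" for i
      using PiE_mem[OF g that] by (cases "i \<in> S") auto
    moreover have "g i = c i" if "i \<in> S" for i
      using PiE_mem[OF g, of i] that assms by auto
    ultimately show "g \<in> {g \<in> topspace (product_topology (\<lambda>_. discrete_topology V) I). \<forall>i\<in>S. g i = c i}"
      using PiE_iff[of g I ?C] g by (simp add: PiE_iff)
  qed
  then show ?thesis
    by (simp add: closedin_product_topology)
qed

lemma closedin_finitely_determined_discrete:
  assumes "finite V" "finite S" "S \<subseteq> I"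
    and determined: "\<And>g g'. \<forall>i\<in>S. g i = g' i \<Longrightarrow> P g = P g'"
  shows "closedin (product_topology (\<lambda>_. discrete_topology V) I)
           {g \<in> topspace (product_topology (\<lambda>_. discrete_topology V) I). P g}"
proof -
  let ?X = "product_topology (\<lambda>_. discrete_topology V) I"
  let ?cyl = "\<lambda>c. {g \<in> topspace ?X. \<forall>i\<in>S. g i = c i}"
  have "{g \<in> topspace ?X. P g} = \<Union> (?cyl ` {c \<in> S \<rightarrow>\<^sub>E V. P c})"
  proof (intro equalityI subsetI)
    fix g assume "g \<in> {g \<in> topspace ?X. P g}"
    then have g: "g \<in> topspace ?X" "P g" by auto
    then have "restrict g S \<in> S \<rightarrow>\<^sub>E V" "P (restrict g S)"
      using \<open>S \<subseteq> I\<close> determined[of g "restrict g S"] by (auto simp: PiE_iff)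
    then have "?cyl (restrict g S) \<in> ?cyl ` {c \<in> S \<rightarrow>\<^sub>E V. P c}"
      by (intro imageI CollectI conjI)
    moreover have "g \<in> ?cyl (restrict g S)"
      using g(1) by simp
    ultimately show "g \<in> \<Union> (?cyl ` {c \<in> S \<rightarrow>\<^sub>E V. P c})"
      by (rule UnionI)
  next
    fix g assume "g \<in> \<Union> (?cyl ` {c \<in> S \<rightarrow>\<^sub>E V. P c})"
    then obtain c where "P c" "g \<in> topspace ?X" "\<forall>i\<in>S. g i = c i" by auto
    then show "g \<in> {g \<in> topspace ?X. P g}"
      using determined[of g c] by auto
  qed
  moreover have "finite (S \<rightarrow>\<^sub>E V)"
    using assms(1,2) by (simp add: finite_PiE)
  ultimately show ?thesis
    using closedin_cylinder_discrete[OF assms(3)] by (auto intro!: closedin_Union)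
qed

lemma compact_space_indexed_fip:
  assumes "compact_space X" and closed: "\<And>j. j \<in> J \<Longrightarrow> closedin X (M j)"
    and fip: "\<And>W. finite W \<Longrightarrow> W \<subseteq> J \<Longrightarrow> topspace X \<inter> \<Inter> (M ` W) \<noteq> {}"
  shows "topspace X \<inter> \<Inter> (M ` J) \<noteq> {}"
proof -
  let ?\<U> = "insert (topspace X) (M ` J)"
  have "\<forall>C\<in>?\<U>. closedin X C"
    using closed by auto
  moreover have "\<forall>\<F>. finite \<F> \<and> \<F> \<subseteq> ?\<U> \<longrightarrow> \<Inter>\<F> \<noteq> {}"
  proof (intro allI impI)
    fix \<F> assume \<F>: "finite \<F> \<and> \<F> \<subseteq> ?\<U>"
    then have "finite (\<F> - {topspace X})" "\<F> - {topspace X} \<subseteq> M ` J"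
      by auto
    from finite_subset_image[OF this]
    obtain W where W: "W \<subseteq> J" "finite W" "\<F> - {topspace X} = M ` W"
      by (elim exE conjE) (erule that; assumption)
    have "topspace X \<inter> \<Inter> (M ` W) \<subseteq> \<Inter>\<F>"
      using W(3) by blast
    then show "\<Inter>\<F> \<noteq> {}"
      using fip[OF W(2,1)] by blast
  qed
  ultimately have "\<Inter>?\<U> \<noteq> {}"
    using \<open>compact_space X\<close>[unfolded compact_space_fip, rule_format] by blast
  then show ?thesis
    by simp
qed

lemma compactness_for_colorings:
  fixes P :: "'j \<Rightarrow> ('i \<Rightarrow> 'v) \<Rightarrow> bool" and S :: "'j \<Rightarrow> 'i set"
  assumes "finite V"
    and support: "\<And>j. j \<in> J \<Longrightarrow> finite (S j) \<and> S j \<subseteq> I"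
    and determined: "\<And>j g g'. j \<in> J \<Longrightarrow> \<forall>i\<in>S j. g i = g' i \<Longrightarrow> P j g = P j g'"
    and satisfiable: "\<And>W. finite W \<Longrightarrow> W \<subseteq> J \<Longrightarrow> \<exists>g\<in>I \<rightarrow>\<^sub>E V. \<forall>j\<in>W. P j g"
  shows "\<exists>g\<in>I \<rightarrow>\<^sub>E V. \<forall>j\<in>J. P j g"
proof -
  define X where "X = product_topology (\<lambda>_. discrete_topology V) I"
  have "topspace X \<inter> \<Inter> ((\<lambda>j. {g \<in> topspace X. P j g}) ` J) \<noteq> {}"
  proof (rule compact_space_indexed_fip)
    show "compact_space X"
      using \<open>finite V\<close> unfolding X_def
      by (intro compact_space_product_topology[THEN iffD2] disjI2 ballI)
        (simp add: compact_space_discrete_topology)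
    show "closedin X {g \<in> topspace X. P j g}" if "j \<in> J" for j
      using closedin_finitely_determined_discrete[OF \<open>finite V\<close>, of "S j" I "P j"]
        support[OF that] determined[OF that] unfolding X_def by blast
    show "topspace X \<inter> \<Inter> ((\<lambda>j. {g \<in> topspace X. P j g}) ` W) \<noteq> {}"
      if W: "finite W" "W \<subseteq> J" for W
    proof -
      obtain g where "g \<in> I \<rightarrow>\<^sub>E V" "\<forall>j\<in>W. P j g"
        using satisfiable[OF W] by blast
      then have "g \<in> topspace X \<inter> \<Inter> ((\<lambda>j. {g \<in> topspace X. P j g}) ` W)"
        unfolding X_def by simp
      then show ?thesis
        by blast
    qed
  qed
  then obtain g where "g \<in> topspace X" "\<forall>j\<in>J. P j g"
    by blast
  then show ?thesis
    unfolding X_def by auto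
qed

section \<open>Kernels of colorings\<close>

lemma ker_on_cong: "(\<And>x. x \<in> X \<Longrightarrow> g x = g' x) \<Longrightarrow> ker_on X g = ker_on X g'"
  unfolding ker_on_def by auto

lemma ker_on_recolor_mono:
  assumes "ker_on Y \<mu> \<subseteq> ker_on Y \<nu>" "Comp C p ` X \<subseteq> Y"
  shows "ker_on X (recolor C \<mu> p) \<subseteq> ker_on X (recolor C \<nu> p)"
  using assms unfolding ker_on_def recolor_def by blast

lemma coloring_with_same_kernel:
  assumes "finite X" "card (h ` X) \<le> t"
  shows "\<exists>\<mu>\<in>X \<rightarrow>\<^sub>E {..<t}. ker_on X \<mu> = ker_on X h"
proof -
  obtain e where e: "bij_betw e (h ` X) {0..<card (h ` X)}"
    using ex_bij_betw_finite_nat \<open>finite X\<close> by blast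
  have "e (h x) < t" if "x \<in> X" for x
    using bij_betwE[OF e] that assms(2) by fastforce
  then have "restrict (e \<circ> h) X \<in> X \<rightarrow>\<^sub>E {..<t}"
    by auto
  moreover have "ker_on X (restrict (e \<circ> h) X) = ker_on X h"
    using e unfolding ker_on_def bij_betw_def inj_on_def by auto
  ultimately show ?thesis by blast
qed

lemma common_refinement_coloring:
  fixes \<kappa> :: "'l \<Rightarrow> 'a \<Rightarrow> nat"
  assumes "finite L" and colors: "\<And>l. l \<in> L \<Longrightarrow> finite (\<kappa> l ` X)"
  shows "\<exists>\<kappa>' k'. k' \<ge> 2 \<and> \<kappa>' ` X \<subseteq> {..<k'} \<and> (\<forall>l\<in>L. ker_on X \<kappa>' \<subseteq> ker_on X (\<kappa> l))"
proof -
  define \<Phi> where "\<Phi> x = (\<lambda>l\<in>L. \<kappa> l x)" for x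
  have "\<Phi> ` X \<subseteq> (\<Pi>\<^sub>E l\<in>L. \<kappa> l ` X)"
    unfolding \<Phi>_def by fastforce
  then have "finite (\<Phi> ` X)"
    using \<open>finite L\<close> colors by (meson finite_PiE finite_subset)
  then obtain e where e: "bij_betw e (\<Phi> ` X) {0..<card (\<Phi> ` X)}"
    using ex_bij_betw_finite_nat by blast
  have "(e \<circ> \<Phi>) ` X \<subseteq> {..<max 2 (card (\<Phi> ` X))}"
    using bij_betwE[OF e] by fastforce
  moreover have "ker_on X (e \<circ> \<Phi>) \<subseteq> ker_on X (\<kappa> l)" if "l \<in> L" for l
  proof (rule subrelI)
    fix x y assume "(x, y) \<in> ker_on X (e \<circ> \<Phi>)"
    then have xy: "x \<in> X" "y \<in> X" "e (\<Phi> x) = e (\<Phi> y)"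
      by (auto simp: ker_on_def)
    then have "\<Phi> x = \<Phi> y"
      using bij_betw_imp_inj_on[OF e] by (auto dest: inj_onD)
    then have "\<kappa> l x = \<kappa> l y"
      using that unfolding \<Phi>_def by (metis restrict_apply')
    then show "(x, y) \<in> ker_on X (\<kappa> l)"
      using xy by (simp add: ker_on_def)
  qed
  ultimately show ?thesis
    by (metis max.cobounded1)
qed

section \<open>Colorings of hom-sets\<close>

lemma category_comp_closed:
  "\<lbrakk>category C; X \<in> Obj C; Y \<in> Obj C; Z \<in> Obj C; f \<in> Hom C X Y; g \<in> Hom C Y Z\<rbrakk>
    \<Longrightarrow> Comp C g f \<in> Hom C X Z"
  unfolding category_def by blast

lemma category_assoc:
  "\<lbrakk>category C; X \<in> Obj C; Y \<in> Obj C; Z \<in> Obj C; W \<in> Obj C;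
    f \<in> Hom C X Y; g \<in> Hom C Y Z; h \<in> Hom C Z W\<rbrakk>
    \<Longrightarrow> Comp C h (Comp C g f) = Comp C (Comp C h g) f"
  unfolding category_def by blast

definition ker_essential :: "('o, 'm) cat \<Rightarrow> 'o \<Rightarrow> 'o \<Rightarrow> 'o \<Rightarrow> ('m \<times> 'm) set \<Rightarrow> bool" where
  "ker_essential C F A B Q \<longleftrightarrow>
     (\<forall>k\<ge>2. \<forall>\<kappa> :: 'm \<Rightarrow> nat. \<kappa> ` Hom C A F \<subseteq> {..<k} \<longrightarrow>
        (\<exists>w\<in>Hom C B F. Q \<subseteq> ker_on (Hom C A B) (recolor C \<kappa> w)))"

lemma essential_at_iff_ker_essential:
  "essential_at C F t A B \<mu> \<longleftrightarrow>
     t > 0 \<and> \<mu> ` Hom C A B \<subseteq> {..<t} \<and> ker_essential C F A B (ker_on (Hom C A B) \<mu>)"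
  unfolding essential_at_def ker_essential_def ..

lemma ex_counter_coloring:
  assumes "\<not> ker_essential C F A B Q"
  shows "\<exists>\<kappa>. finite (\<kappa> ` Hom C A F) \<and> (\<forall>w\<in>Hom C B F. \<not> Q \<subseteq> ker_on (Hom C A B) (recolor C \<kappa> w))"
proof -
  obtain k \<kappa> where "\<kappa> ` Hom C A F \<subseteq> {..<k}" "\<forall>w\<in>Hom C B F. \<not> Q \<subseteq> ker_on (Hom C A B) (recolor C \<kappa> w)"
    using assms unfolding ker_essential_def by blast
  then show ?thesis
    by (meson finite_lessThan finite_subset)
qed

section \<open>Essential colorings from finite Ramsey degrees\<close>

locale universal_amalgamation =
  fixes C :: "('o, 'm) cat" and Aset :: "'o set" and F :: 'o
  assumes category: "category C"
    and Aset_objects: "Aset \<subseteq> Obj C"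
    and F_object: "F \<in> Obj C"
    and finite_Hom: "\<lbrakk>A \<in> Aset; B \<in> Aset\<rbrakk> \<Longrightarrow> finite (Hom C A B)"
    and mono_into_F: "\<lbrakk>D \<in> Aset; r \<in> Hom C D F\<rbrakk> \<Longrightarrow> mono C D F r"
    and universal: "universal C Aset F"
    and amalgamation: "\<lbrakk>A \<in> Aset; B \<in> Aset; e \<in> Hom C A F; f \<in> Hom C B F\<rbrakk> \<Longrightarrow>
          \<exists>D\<in>Aset. \<exists>r\<in>Hom C D F. \<exists>p\<in>Hom C A D. \<exists>q\<in>Hom C B D.
            Comp C r p = e \<and> Comp C r q = f"
begin

lemma comp_closed:
  "\<lbrakk>X \<in> Aset; Y \<in> Aset; Z \<in> Aset \<union> {F}; f \<in> Hom C X Y; g \<in> Hom C Y Z\<rbrakk>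
    \<Longrightarrow> Comp C g f \<in> Hom C X Z"
  using category_comp_closed[OF category] Aset_objects F_object by blast

lemma comp_assoc:
  "\<lbrakk>X \<in> Aset; Y \<in> Aset; Z \<in> Aset; f \<in> Hom C X Y; g \<in> Hom C Y Z; h \<in> Hom C Z F\<rbrakk>
    \<Longrightarrow> Comp C h (Comp C g f) = Comp C (Comp C h g) f"
  using category_assoc[OF category] Aset_objects F_object by blast

lemma recolor_comp:
  "\<lbrakk>A \<in> Aset; B \<in> Aset; D \<in> Aset; x \<in> Hom C A B; p \<in> Hom C B D; v \<in> Hom C D F\<rbrakk>
    \<Longrightarrow> recolor C (recolor C \<kappa> v) p x = recolor C \<kappa> (Comp C v p) x"
  unfolding recolor_def by (simp add: comp_assoc)

lemma joint_factorization:
  assumes "finite W" "W \<subseteq> (SIGMA B:Aset. Hom C B F)" "Aset \<noteq> {}"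
  shows "\<exists>D\<in>Aset. \<exists>r\<in>Hom C D F. \<forall>(B, w)\<in>W. \<exists>p\<in>Hom C B D. Comp C r p = w"
  using assms(1,2)
proof (induction W rule: finite_induct)
  case empty
  then show ?case
    using universal \<open>Aset \<noteq> {}\<close> unfolding universal_def arrow_def by blast
next
  case (insert Bw W)
  obtain B w where Bw: "Bw = (B, w)" "B \<in> Aset" "w \<in> Hom C B F"
    using insert.prems by blast
  obtain D r where D: "D \<in> Aset" "r \<in> Hom C D F"
    and factor: "\<forall>(B', w')\<in>W. \<exists>p\<in>Hom C B' D. Comp C r p = w'"
    using insert by auto
  obtain D' r' p q where D': "D' \<in> Aset" "r' \<in> Hom C D' F" "p \<in> Hom C D D'" "q \<in> Hom C B D'"
    and r': "Comp C r' p = r" "Comp C r' q = w"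
    using amalgamation[OF D(1) Bw(2) D(2) Bw(3)] by blast
  have "\<exists>p'\<in>Hom C B' D'. Comp C r' p' = w'" if Bw': "(B', w') \<in> W" for B' w'
  proof -
    obtain p0 where "p0 \<in> Hom C B' D" "Comp C r p0 = w'"
      using bspec[OF factor Bw'] by auto
    moreover have "B' \<in> Aset"
      using insert.prems Bw' by blast
    ultimately show ?thesis
      using D D' r' by (metis comp_assoc comp_closed UnI1)
  qed
  then show ?case
    using D' r' Bw(1) by blast
qed

lemma ramsey_bound_copy:
  assumes A: "A \<in> Aset" and D: "D \<in> Aset" and bound: "ramsey_bound C Aset A t"
    and "k \<ge> 2" and colors: "\<kappa> ` Hom C A F \<subseteq> {..<k}"
  shows "\<exists>v\<in>Hom C D F. card (recolor C \<kappa> v ` Hom C A D) \<le> t"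
proof -
  obtain E where E: "E \<in> Aset" "ramsey_arrow C E D A k t"
    using bound \<open>k \<ge> 2\<close> D unfolding ramsey_bound_def by blast
  obtain u where u: "u \<in> Hom C E F"
    using universal E unfolding universal_def arrow_def by blast
  have "recolor C \<kappa> u ` Hom C A E \<subseteq> {..<k}"
    using colors comp_closed[OF A E(1) _ _ u] unfolding recolor_def by blast
  then obtain w where w: "w \<in> Hom C D E"
    and few: "card (recolor C \<kappa> u ` Comp C w ` Hom C A D) \<le> t"
    using E(2) unfolding ramsey_arrow_def by blast
  have "recolor C \<kappa> u ` Comp C w ` Hom C A D = recolor C (recolor C \<kappa> u) w ` Hom C A D"
    by (simp add: recolor_def image_image)
  also have "\<dots> = recolor C \<kappa> (Comp C u w) ` Hom C A D"
    by (intro image_cong) (simp_all add: recolor_comp[OF A D E(1) _ w u])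
  finally have "recolor C \<kappa> u ` Comp C w ` Hom C A D = recolor C \<kappa> (Comp C u w) ` Hom C A D" .
  then show ?thesis
    using few comp_closed[OF D E(1) _ w u] by auto
qed

lemma ker_on_recolor_comp_mono:
  assumes A: "A \<in> Aset" and B: "B \<in> Aset" and D: "D \<in> Aset"
    and p: "p \<in> Hom C B D" and v: "v \<in> Hom C D F"
    and "ker_on (Hom C A D) \<mu> \<subseteq> ker_on (Hom C A D) (recolor C \<kappa> v)"
    and "ker_on (Hom C A F) \<kappa> \<subseteq> ker_on (Hom C A F) \<kappa>'"
  shows "ker_on (Hom C A B) (recolor C \<mu> p) \<subseteq> ker_on (Hom C A B) (recolor C \<kappa>' (Comp C v p))"
proof -
  have vp: "Comp C v p \<in> Hom C B F"
    using comp_closed[OF B D _ p v] by simp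
  have "ker_on (Hom C A B) (recolor C \<mu> p) \<subseteq> ker_on (Hom C A B) (recolor C (recolor C \<kappa> v) p)"
    using assms(6) comp_closed[OF A B _ _ p] D by (intro ker_on_recolor_mono) auto
  also have "\<dots> = ker_on (Hom C A B) (recolor C \<kappa> (Comp C v p))"
    using recolor_comp[OF A B D _ p v] by (rule ker_on_cong)
  also have "\<dots> \<subseteq> ker_on (Hom C A B) (recolor C \<kappa>' (Comp C v p))"
    using assms(7) comp_closed[OF A B _ _ vp] by (intro ker_on_recolor_mono) auto
  finally show ?thesis .
qed

lemma essential_coloring_of_finite_object:
  assumes A: "A \<in> Aset" and D: "D \<in> Aset" and bound: "ramsey_bound C Aset A t"
  shows "\<exists>\<mu>\<in>Hom C A D \<rightarrow>\<^sub>E {..<t}. \<forall>B\<in>Aset. \<forall>p\<in>Hom C B D.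
           ker_essential C F A B (ker_on (Hom C A B) (recolor C \<mu> p))"
proof (rule ccontr)
  let ?L = "Hom C A D \<rightarrow>\<^sub>E {..<t}"
  assume "\<not> ?thesis"
  then have "\<forall>\<mu>\<in>?L. \<exists>B\<in>Aset. \<exists>p\<in>Hom C B D.
      \<not> ker_essential C F A B (ker_on (Hom C A B) (recolor C \<mu> p))"
    by blast
  then obtain B p where B: "\<And>\<mu>. \<mu> \<in> ?L \<Longrightarrow> B \<mu> \<in> Aset"
    and p: "\<And>\<mu>. \<mu> \<in> ?L \<Longrightarrow> p \<mu> \<in> Hom C (B \<mu>) D"
    and not_essential: "\<And>\<mu>. \<mu> \<in> ?L \<Longrightarrow>
      \<not> ker_essential C F A (B \<mu>) (ker_on (Hom C A (B \<mu>)) (recolor C \<mu> (p \<mu>)))"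
    by metis
  let ?refutes = "\<lambda>\<mu> \<kappa>. finite (\<kappa> ` Hom C A F) \<and> (\<forall>w\<in>Hom C (B \<mu>) F.
    \<not> ker_on (Hom C A (B \<mu>)) (recolor C \<mu> (p \<mu>)) \<subseteq> ker_on (Hom C A (B \<mu>)) (recolor C \<kappa> w))"
  have "\<forall>\<mu>\<in>?L. \<exists>\<kappa>. ?refutes \<mu> \<kappa>"
    by (intro ballI ex_counter_coloring not_essential)
  from bchoice[OF this] obtain \<kappa> where \<kappa>: "\<forall>\<mu>\<in>?L. ?refutes \<mu> (\<kappa> \<mu>)"
    by blast
  have "finite ?L"
    by (simp add: finite_PiE finite_Hom A D)
  moreover have "\<And>\<mu>. \<mu> \<in> ?L \<Longrightarrow> finite (\<kappa> \<mu> ` Hom C A F)"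
    using \<kappa> by blast
  ultimately have "\<exists>\<kappa>' k'. k' \<ge> 2 \<and> \<kappa>' ` Hom C A F \<subseteq> {..<k'} \<and>
      (\<forall>\<mu>\<in>?L. ker_on (Hom C A F) \<kappa>' \<subseteq> ker_on (Hom C A F) (\<kappa> \<mu>))"
    by (rule common_refinement_coloring)
  then obtain \<kappa>' k' where k': "k' \<ge> 2" "\<kappa>' ` Hom C A F \<subseteq> {..<k'}"
    and refines: "\<forall>\<mu>\<in>?L. ker_on (Hom C A F) \<kappa>' \<subseteq> ker_on (Hom C A F) (\<kappa> \<mu>)"
    by blast
  obtain v where v: "v \<in> Hom C D F" "card (recolor C \<kappa>' v ` Hom C A D) \<le> t"
    using ramsey_bound_copy[OF A D bound k'] by blast
  \<comment> \<open>Since \<kappa>' refines \<kappa> \<mu>, the copy v \<cdot> p \<mu> contradicts the choice of \<kappa> \<mu>.\<close>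
  obtain \<mu> where \<mu>: "\<mu> \<in> ?L" "ker_on (Hom C A D) \<mu> = ker_on (Hom C A D) (recolor C \<kappa>' v)"
    using coloring_with_same_kernel[OF finite_Hom[OF A D] v(2)] by blast
  note B = B[OF \<mu>(1)] and p = p[OF \<mu>(1)]
  have vp: "Comp C v (p \<mu>) \<in> Hom C (B \<mu>) F"
    using comp_closed[OF B D _ p v(1)] by simp
  have "ker_on (Hom C A (B \<mu>)) (recolor C \<mu> (p \<mu>)) \<subseteq> ker_on (Hom C A (B \<mu>)) (recolor C (\<kappa> \<mu>) (Comp C v (p \<mu>)))"
    by (rule ker_on_recolor_comp_mono[OF A B D p v(1) equalityD1[OF \<mu>(2)] bspec[OF refines \<mu>(1)]])
  then show False
    using \<kappa> \<mu>(1) vp by blast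
qed

lemma coloring_extension_along_mono:
  assumes A: "A \<in> Aset" and D: "D \<in> Aset" and r: "r \<in> Hom C D F"
    and colors: "\<mu> ` Hom C A D \<subseteq> {..<t}" and "t > 0"
  shows "\<exists>g\<in>Hom C A F \<rightarrow>\<^sub>E {..<t}. \<forall>x\<in>Hom C A D. g (Comp C r x) = \<mu> x"
proof -
  have inj: "inj_on (Comp C r) (Hom C A D)"
    using mono_into_F[OF D r] Aset_objects A unfolding mono_def inj_on_def by blast
  define g where "g = (\<lambda>f\<in>Hom C A F.
    if f \<in> Comp C r ` Hom C A D then \<mu> (inv_into (Hom C A D) (Comp C r) f) else 0)"
  have "g \<in> Hom C A F \<rightarrow>\<^sub>E {..<t}"
    using colors \<open>t > 0\<close> inv_into_into[of _ "Comp C r" "Hom C A D"] unfolding g_def by fastforce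
  moreover have "g (Comp C r x) = \<mu> x" if "x \<in> Hom C A D" for x
    using that comp_closed[OF A D _ _ r] inv_into_f_f[OF inj that] unfolding g_def by auto
  ultimately show ?thesis by blast
qed

lemma essential_recolorings_finitely_satisfiable:
  assumes A: "A \<in> Aset" and "t > 0" and bound: "ramsey_bound C Aset A t"
    and "finite W" "W \<subseteq> (SIGMA B:Aset. Hom C B F)"
  shows "\<exists>g\<in>Hom C A F \<rightarrow>\<^sub>E {..<t}.
           \<forall>(B, w)\<in>W. ker_essential C F A B (ker_on (Hom C A B) (recolor C g w))"
proof -
  obtain D r where D: "D \<in> Aset" "r \<in> Hom C D F"
    and factor: "\<forall>(B, w)\<in>W. \<exists>p\<in>Hom C B D. Comp C r p = w"
    using joint_factorization[OF assms(4,5)] A by auto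
  obtain \<mu> where \<mu>: "\<mu> \<in> Hom C A D \<rightarrow>\<^sub>E {..<t}" and essential_\<mu>:
    "\<forall>B\<in>Aset. \<forall>p\<in>Hom C B D. ker_essential C F A B (ker_on (Hom C A B) (recolor C \<mu> p))"
    using essential_coloring_of_finite_object[OF A D(1) bound] by blast
  obtain g where g: "g \<in> Hom C A F \<rightarrow>\<^sub>E {..<t}" and g_extends: "\<forall>x\<in>Hom C A D. g (Comp C r x) = \<mu> x"
    using coloring_extension_along_mono[OF A D, of \<mu> t] \<mu> \<open>t > 0\<close> by fastforce
  show ?thesis
  proof (intro bexI[OF _ g] ballI, clarify)
    fix B w assume Bw: "(B, w) \<in> W"
    obtain p where p: "p \<in> Hom C B D" "Comp C r p = w"
      using bspec[OF factor Bw] by auto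
    have B: "B \<in> Aset"
      using Bw \<open>W \<subseteq> _\<close> by blast
    have "ker_on (Hom C A B) (recolor C g w) = ker_on (Hom C A B) (recolor C \<mu> p)"
    proof (rule ker_on_cong)
      fix x assume x: "x \<in> Hom C A B"
      have "recolor C g w x = recolor C (recolor C g r) p x"
        using recolor_comp[OF A B D(1) x p(1) D(2)] p(2) by simp
      also have "\<dots> = recolor C \<mu> p x"
        using g_extends comp_closed[OF A B _ x p(1)] D(1) by (simp add: recolor_def)
      finally show "recolor C g w x = recolor C \<mu> p x" .
    qed
    then show "ker_essential C F A B (ker_on (Hom C A B) (recolor C g w))"
      using essential_\<mu> B p(1) by simp
  qed
qed

lemma essential_coloring_exists:
  assumes A: "A \<in> Aset" and "t > 0" and bound: "ramsey_bound C Aset A t"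
  shows "\<exists>\<gamma>. essential C Aset F t A \<gamma>"
proof -
  let ?J = "SIGMA B:Aset. Hom C B F"
  let ?P = "\<lambda>j g. case j of (B, w) \<Rightarrow> ker_essential C F A B (ker_on (Hom C A B) (recolor C g w))"
  have "\<exists>\<gamma>\<in>Hom C A F \<rightarrow>\<^sub>E {..<t}. \<forall>j\<in>?J. ?P j \<gamma>"
  proof (rule compactness_for_colorings[where S = "\<lambda>(B, w). Comp C w ` Hom C A B"])
    fix j assume "j \<in> ?J"
    then obtain B w where j: "j = (B, w)" "B \<in> Aset" "w \<in> Hom C B F"
      by blast
    have "Comp C w ` Hom C A B \<subseteq> Hom C A F"
      using comp_closed[OF A j(2) _ _ j(3)] by auto
    then show "finite ((\<lambda>(B, w). Comp C w ` Hom C A B) j) \<and> (\<lambda>(B, w). Comp C w ` Hom C A B) j \<subseteq> Hom C A F"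
      using finite_Hom[OF A j(2)] j(1) by simp
    fix g g' :: "'m \<Rightarrow> nat"
    assume "\<forall>f\<in>(\<lambda>(B, w). Comp C w ` Hom C A B) j. g f = g' f"
    then have "ker_on (Hom C A B) (recolor C g w) = ker_on (Hom C A B) (recolor C g' w)"
      using j(1) by (intro ker_on_cong) (simp add: recolor_def)
    then show "?P j g = ?P j g'"
      using j(1) by simp
  next
    fix W assume "finite W" "W \<subseteq> ?J"
    then show "\<exists>g\<in>Hom C A F \<rightarrow>\<^sub>E {..<t}. \<forall>j\<in>W. ?P j g"
      by (rule essential_recolorings_finitely_satisfiable[OF A \<open>t > 0\<close> bound])
  qed simp
  then obtain \<gamma> where \<gamma>: "\<gamma> \<in> Hom C A F \<rightarrow>\<^sub>E {..<t}" and essential_\<gamma>: "\<forall>j\<in>?J. ?P j \<gamma>"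
    by blast
  have "essential_at C F t A B (recolor C \<gamma> w)" if B: "B \<in> Aset" and w: "w \<in> Hom C B F" for B w
  proof -
    have "recolor C \<gamma> w ` Hom C A B \<subseteq> {..<t}"
      using \<gamma> comp_closed[OF A B _ _ w] unfolding recolor_def by auto
    moreover have "ker_essential C F A B (ker_on (Hom C A B) (recolor C \<gamma> w))"
      using essential_\<gamma> B w by simp
    ultimately show ?thesis
      using \<open>t > 0\<close> by (simp add: essential_at_iff_ker_essential)
  qed
  then have "essential C Aset F t A \<gamma>"
    using \<open>t > 0\<close> \<gamma> unfolding essential_def by blast
  then show ?thesis by blast
qed

end

lemma ramsey_bound_the_ramsey_degree:
  assumes "ramsey_degree C Aset A < \<infinity>"
  shows "the_enat (ramsey_degree C Aset A) > 0 \<and> ramsey_bound C Aset A (the_enat (ramsey_degree C Aset A))"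
proof -
  have ex: "\<exists>n>0. ramsey_bound C Aset A n"
    using assms unfolding ramsey_degree_def by (auto split: if_splits)
  then have "the_enat (ramsey_degree C Aset A) = (LEAST n. n > 0 \<and> ramsey_bound C Aset A n)"
    unfolding ramsey_degree_def by simp
  then show ?thesis
    using LeastI_ex[of "\<lambda>n. n > 0 \<and> ramsey_bound C Aset A n"] ex by simp
qed

lemma universal_amalgamation_if_locally_finite:
  assumes "category C" "conditions_C1_C5 C Cfin" "Aset \<subseteq> Cfin" "F \<in> Obj C"
    and "universal C Aset F" "locally_finite C Aset F"
  shows "universal_amalgamation C Aset F"
proof
  fix A B e f assume "A \<in> Aset" "B \<in> Aset" "e \<in> Hom C A F" "f \<in> Hom C B F"
  from assms(6)[unfolded locally_finite_def, rule_format, OF this]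
  show "\<exists>D\<in>Aset. \<exists>r\<in>Hom C D F. \<exists>p\<in>Hom C A D. \<exists>q\<in>Hom C B D. Comp C r p = e \<and> Comp C r q = f"
    by blast
qed (use assms in \<open>auto simp: conditions_C1_C5_def subset_iff\<close>)

theorem proposition3p6:
  fixes C :: "('o, 'm) cat" and Cfin :: "'o set" and Aset :: "'o set" and F :: 'o
  assumes "category C"
    and "conditions_C1_C5 C Cfin"
    and "Aset \<subseteq> Cfin"
    and "F \<in> Obj C"
    and "universal C Aset F"
    and "locally_finite C Aset F"
    and "finite_ramsey_degrees C Aset"
  shows "\<forall>A\<in>Aset. \<exists>\<gamma> :: 'm \<Rightarrow> nat.
           essential C Aset F (the_enat (ramsey_degree C Aset A)) A \<gamma>"
proof
  fix A assume "A \<in> Aset"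
  interpret universal_amalgamation C Aset F
    using universal_amalgamation_if_locally_finite assms(1-6) .
  have "ramsey_degree C Aset A < \<infinity>"
    using assms(7) \<open>A \<in> Aset\<close> unfolding finite_ramsey_degrees_def by blast
  from ramsey_bound_the_ramsey_degree[OF this]
  show "\<exists>\<gamma>. essential C Aset F (the_enat (ramsey_degree C Aset A)) A \<gamma>"
    using essential_coloring_exists[OF \<open>A \<in> Aset\<close>] by blast
qed

end
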